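(* Let $n\ge 1$ and let $U\in\mathbb{C}^{n\times n}$ be unitary. Write $U=A+iB$ with $A,B\in\mathbb{R}^{n\times n}$, and define the real matrix \[ M=\begin{bmatrix} A & -B\\ B & A\end{bmatrix}\in\mathbb{R}^{2n\times 2n}. \] Let $M=Z\Sigma Z^{-1}$ be an eigendecomposition of $M$, where $Z\in\mathbb{C}^{2n\times 2n}$ is invertible and $\Sigma\in\mathbb{C}^{2n\times 2n}$ is diagonal. For each eigenvalue $\mu\in\sigma(M)$, let $Z_\mu\in\mathbb{C}^{2n\times m_M(\mu)}$ be the matrix formed by those columns of $Z$ whose corresponding diagonal entry of $\Sigma$ equals $\mu$. Let $L=[\,I_n\quad iI_n\,]\in\mathbb{C}^{n\times 2n}$, so that $L\begin{bmatrix}z^{(1)}\\ z^{(2)}\end{bmatrix}=z^{(1)}+iz^{(2)}$ for $z^{(1)},z^{(2)}\in\mathbb{C}^n$, and define $X_\mu:=LZ_\mu\in\mathbb{C}^{n\times m_M(\mu)}$. Then $\operatorname{rank}(X_\mu)=m_U(\mu)$, and whenever $m_U(\mu)>0$, the column space of $X_\mu$ equals the eigenspace $\ker(U-\mu I_n)$ of $U$ associated with $\mu$.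
   Context: $\sigma(\cdot)$ denotes the spectrum (set of eigenvalues) of a matrix. Since $M$ and $U$ are normal, algebraic and geometric multiplicities coincide; $m_M(\mu)$ and $m_U(\mu)$ denote the multiplicity of $\mu$ as an eigenvalue of $M$ and of $U$ respectively, with the convention $m_U(\mu)=0$ if $\mu\notin\sigma(U)$. *)

theory Defs
  imports "Jordan_Normal_Form.Jordan_Normal_Form" "Jordan_Normal_Form.Schur_Decomposition"
    "Jordan_Normal_Form.DL_Rank" "Jordan_Normal_Form.Matrix_Kernel"
begin

definition unitary_mat :: "complex mat \<Rightarrow> nat \<Rightarrow> bool" where
  "unitary_mat U n \<longleftrightarrow> U \<in> carrier_mat n n \<and>
     mat_adjoint U * U = 1\<^sub>m n \<and> U * mat_adjoint U = 1\<^sub>m n"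

definition realify :: "complex mat \<Rightarrow> real mat" where
  "realify U = (let A = map_mat Re U; B = map_mat Im U in four_block_mat A (- B) B A)"

definition Lmat :: "nat \<Rightarrow> complex mat" where
  "Lmat n = four_block_mat (1\<^sub>m n) (\<i> \<cdot>\<^sub>m 1\<^sub>m n) (0\<^sub>m 0 n) (0\<^sub>m 0 n)"

definition eig_idx :: "complex mat \<Rightarrow> complex \<Rightarrow> nat list" where
  "eig_idx D mu = filter (\<lambda>j. D $$ (j, j) = mu) [0..<dim_row D]"

definition Zsub :: "complex mat \<Rightarrow> complex mat \<Rightarrow> complex \<Rightarrow> complex mat" where
  "Zsub Z D mu = mat (dim_row Z) (length (eig_idx D mu))
     (\<lambda>(i, k). Z $$ (i, eig_idx D mu ! k))"

(* multiplicity of mu as an eigenvalue (algebraic = geometric for normal matrices);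
   it is 0 when mu is not an eigenvalue *)
definition eig_mult :: "complex mat \<Rightarrow> complex \<Rightarrow> nat" where
  "eig_mult U mu = Polynomial.order mu (char_poly U)"

end

theory Submission
  imports Defs "Jordan_Normal_Form.Jordan_Normal_Form_Existence"
    "Jordan_Normal_Form.Jordan_Normal_Form_Uniqueness"
begin

text \<open>With T = [I, iI; I, -iI] one has T M = diag(U, conj U) T, and L is the first block row
  of T, so L M = U L. Since M is diagonalizable, so is diag(U, conj U); geometric multiplicity
  never exceeds algebraic multiplicity and both are additive over diagonal blocks, so for U the
  two agree at every mu. The columns Z_mu span ker(M - mu I), and L maps ker(M - mu I) onto
  ker(U - mu I): an eigenvector y of U is the image of the eigenvector inv(T) (y, 0) of M.
  Hence the column space of X_mu is ker(U - mu I), whose dimension is m_U(mu).\<close>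

lemma mat_kernel_minus_smult_one_iff:
  assumes A: "A \<in> carrier_mat n n"
  shows "v \<in> mat_kernel (A - e \<cdot>\<^sub>m 1\<^sub>m n) \<longleftrightarrow> v \<in> carrier_vec n \<and> A *\<^sub>v v = e \<cdot>\<^sub>v v"
proof -
  have "(e \<cdot>\<^sub>m 1\<^sub>m n) *\<^sub>v v = e \<cdot>\<^sub>v v" if "v \<in> carrier_vec n"
    using that by auto
  then have "v \<in> mat_kernel (A - e \<cdot>\<^sub>m 1\<^sub>m n) \<longleftrightarrow>
      v \<in> carrier_vec n \<and> A *\<^sub>v v - e \<cdot>\<^sub>v v = 0\<^sub>v n"
    using A unfolding mat_kernel_def by (auto simp: minus_mult_distrib_mat_vec)
  moreover have "A *\<^sub>v v - e \<cdot>\<^sub>v v = 0\<^sub>v n \<longleftrightarrow> A *\<^sub>v v = e \<cdot>\<^sub>v v" if v: "v \<in> carrier_vec n"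
  proof
    assume eq: "A *\<^sub>v v - e \<cdot>\<^sub>v v = 0\<^sub>v n"
    show "A *\<^sub>v v = e \<cdot>\<^sub>v v"
    proof (rule eq_vecI)
      fix i
      assume "i < dim_vec (e \<cdot>\<^sub>v v)"
      moreover have "(A *\<^sub>v v - e \<cdot>\<^sub>v v) $ i = 0\<^sub>v n $ i"
        by (simp only: eq)
      ultimately show "(A *\<^sub>v v) $ i = (e \<cdot>\<^sub>v v) $ i"
        using A v by simp
    qed (use A v in simp)
  qed (use A v in simp)
  ultimately show ?thesis
    by blast
qed

lemma mem_col_space_iff:
  assumes X: "X \<in> carrier_mat n k"
  shows "x \<in> vec_space.col_space n X \<longleftrightarrow> (\<exists>w\<in>carrier_vec k. x = X *\<^sub>v w)"
proof -
  have col_space: "vec_space.col_space n X = {y \<in> carrier_vec n. \<exists>w\<in>carrier_vec k. X *\<^sub>v w = y}"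
    unfolding vec_space.col_space_eq[OF X] using carrier_matD[OF X] by simp
  show ?thesis
  proof
    assume "x \<in> vec_space.col_space n X"
    then obtain w where "w \<in> carrier_vec k" "X *\<^sub>v w = x"
      unfolding col_space by blast
    then show "\<exists>w\<in>carrier_vec k. x = X *\<^sub>v w"
      by auto
  next
    assume "\<exists>w\<in>carrier_vec k. x = X *\<^sub>v w"
    then obtain w where w: "w \<in> carrier_vec k" "x = X *\<^sub>v w"
      by blast
    then show "x \<in> vec_space.col_space n X"
      unfolding col_space using mult_mat_vec_carrier[OF X w(1)] by auto
  qed
qed

lemma col_space_mult:
  assumes L: "L \<in> carrier_mat m n" and Y: "Y \<in> carrier_mat n k"
  shows "vec_space.col_space m (L * Y) = (\<lambda>v. L *\<^sub>v v) ` vec_space.col_space n Y"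
proof
  have LY: "L * Y \<in> carrier_mat m k"
    by (rule mult_carrier_mat[OF L Y])
  show "vec_space.col_space m (L * Y) \<subseteq> (\<lambda>v. L *\<^sub>v v) ` vec_space.col_space n Y"
  proof
    fix x
    assume "x \<in> vec_space.col_space m (L * Y)"
    then obtain w where w: "w \<in> carrier_vec k" and x: "x = (L * Y) *\<^sub>v w"
      unfolding mem_col_space_iff[OF LY] by blast
    have "Y *\<^sub>v w \<in> vec_space.col_space n Y"
      unfolding mem_col_space_iff[OF Y] using w by blast
    moreover have "x = L *\<^sub>v (Y *\<^sub>v w)"
      unfolding x by (rule assoc_mult_mat_vec[OF L Y w])
    ultimately show "x \<in> (\<lambda>v. L *\<^sub>v v) ` vec_space.col_space n Y"
      by blast
  qed
  show "(\<lambda>v. L *\<^sub>v v) ` vec_space.col_space n Y \<subseteq> vec_space.col_space m (L * Y)"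
  proof
    fix x
    assume "x \<in> (\<lambda>v. L *\<^sub>v v) ` vec_space.col_space n Y"
    then obtain v where "v \<in> vec_space.col_space n Y" and x: "x = L *\<^sub>v v"
      by blast
    then obtain w where w: "w \<in> carrier_vec k" and v: "v = Y *\<^sub>v w"
      unfolding mem_col_space_iff[OF Y] by blast
    have "x = (L * Y) *\<^sub>v w"
      unfolding x v by (rule assoc_mult_mat_vec[OF L Y w, symmetric])
    then show "x \<in> vec_space.col_space m (L * Y)"
      unfolding mem_col_space_iff[OF LY] using w by blast
  qed
qed

lemma rank_eq_kernel_dim_if_col_space_eq:
  assumes "vec_space.col_space n X = mat_kernel K" and "K \<in> carrier_mat m n"
  shows "vec_space.rank n X = kernel.dim n K"
proof -
  interpret kernel m n K by unfold_locales (rule assms(2))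
  show ?thesis
    using assms(1) unfolding vec_space.rank_def vec_space.col_space_def by simp
qed

lemma dim_gen_eigenspace_1:
  assumes "A \<in> carrier_mat n n"
  shows "dim_gen_eigenspace A e 1 = kernel.dim n (A - e \<cdot>\<^sub>m 1\<^sub>m n)"
proof -
  have "char_matrix A e = A - e \<cdot>\<^sub>m 1\<^sub>m n"
    using assms unfolding char_matrix_def by (auto intro!: eq_matI)
  then show ?thesis
    using assms unfolding dim_gen_eigenspace_def kernel_dim_def by simp
qed

lemma diagonal_mat_mult_vec_index:
  assumes "diagonal_mat S" "S \<in> carrier_mat n n" "w \<in> carrier_vec n" "j < n"
  shows "(S *\<^sub>v w) $ j = S $$ (j, j) * w $ j"
proof -
  have "(S *\<^sub>v w) $ j = (\<Sum>i\<in>{0..<n}. S $$ (j, i) * w $ i)"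
    using assms by (simp add: scalar_prod_def)
  also have "\<dots> = (\<Sum>i\<in>{0..<n}. if i = j then S $$ (j, j) * w $ j else 0)"
    using assms unfolding diagonal_mat_def by (intro sum.cong) auto
  finally show ?thesis
    using assms(4) by simp
qed

lemma intertwiner_mult_mat_vec_eigen:
  assumes A: "(A :: 'a :: field mat) \<in> carrier_mat n n" and B: "B \<in> carrier_mat m m"
    and T: "T \<in> carrier_mat n m" and AT: "A * T = T * B"
    and v: "v \<in> carrier_vec m" "B *\<^sub>v v = e \<cdot>\<^sub>v v"
  shows "A *\<^sub>v (T *\<^sub>v v) = e \<cdot>\<^sub>v (T *\<^sub>v v)"
proof -
  have "A *\<^sub>v (T *\<^sub>v v) = (A * T) *\<^sub>v v"
    by (rule assoc_mult_mat_vec[OF A T v(1), symmetric])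
  also have "\<dots> = T *\<^sub>v (B *\<^sub>v v)"
    unfolding AT by (rule assoc_mult_mat_vec[OF T B v(1)])
  also have "\<dots> = e \<cdot>\<^sub>v (T *\<^sub>v v)"
    unfolding v(2) by (rule mult_mat_vec[OF T v(1)])
  finally show ?thesis .
qed

lemma intertwiner_inverse:
  assumes A: "(A :: 'a :: semiring_1 mat) \<in> carrier_mat n n" and B: "B \<in> carrier_mat m m"
    and T: "T \<in> carrier_mat n m" and T': "T' \<in> carrier_mat m n"
    and AT: "A * T = T * B" and inv: "T * T' = 1\<^sub>m n" "T' * T = 1\<^sub>m m"
  shows "B * T' = T' * A"
proof -
  have "B * T' = (T' * T) * (B * T')"
    by (simp add: inv left_mult_one_mat[OF mult_carrier_mat[OF B T']])
  also have "\<dots> = T' * ((T * B) * T')"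
    by (simp add: assoc_mult_mat[OF T' T mult_carrier_mat[OF B T']] assoc_mult_mat[OF T B T'])
  also have "\<dots> = T' * (A * (T * T'))"
    by (simp add: AT[symmetric] assoc_mult_mat[OF A T T'])
  also have "\<dots> = T' * A"
    by (simp add: inv right_mult_one_mat[OF A])
  finally show ?thesis .
qed

subsection \<open>Multiplicities of diagonalizable matrices\<close>

lemma jordan_matrix_unit_blocks:
  "jordan_matrix (map (\<lambda>a. (1, a)) as) =
     mat (length as) (length as) (\<lambda>(i, j). if i = j then as ! i else (0 :: 'a :: {zero, one}))"
proof (induct as)
  case Nil
  show ?case by (auto simp: jordan_matrix_def intro!: eq_matI)
next
  case (Cons a as)
  have "sum_list (map fst (map (\<lambda>a. (1 :: nat, a)) as)) = length as"
    by (induct as) auto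
  then have "jordan_matrix (map (\<lambda>a. (1, a)) (a # as)) = four_block_mat (jordan_block 1 a)
     (0\<^sub>m 1 (length as)) (0\<^sub>m (length as) 1) (jordan_matrix (map (\<lambda>a. (1, a)) as))"
    using jordan_matrix_Cons[of 1 a "map (\<lambda>a. (1, a)) as"] by simp
  also have "\<dots> = mat (length (a # as)) (length (a # as)) (\<lambda>(i, j). if i = j then (a # as) ! i else 0)"
    unfolding Cons by (rule eq_matI) (auto simp: nth_Cons')
  finally show ?case .
qed

lemma jordan_nf_similar_diagonal:
  assumes "similar_mat A S" "diagonal_mat S" "S \<in> carrier_mat n n"
  shows "jordan_nf A (map (\<lambda>i. (1, S $$ (i, i))) [0..<n])"
proof -
  have "jordan_matrix (map (\<lambda>a. (1, a)) (map (\<lambda>i. S $$ (i, i)) [0..<n])) = S"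
    unfolding jordan_matrix_unit_blocks using assms(2,3) unfolding diagonal_mat_def
    by (auto intro!: eq_matI)
  then show ?thesis
    using assms(1) unfolding jordan_nf_def by (auto simp: o_def)
qed

lemma dim_gen_eigenspace_eq_order_if_similar_diagonal:
  assumes "similar_mat A S" "diagonal_mat S" "S \<in> carrier_mat n n"
  shows "dim_gen_eigenspace A e 1 = Polynomial.order e (char_poly A)"
  unfolding dim_gen_eigenspace[OF jordan_nf_similar_diagonal[OF assms]]
    jordan_nf_order[OF jordan_nf_similar_diagonal[OF assms]]
  by (simp add: filter_map o_def case_prod_unfold)

lemma dim_gen_eigenspace_le_order:
  assumes "(A :: complex mat) \<in> carrier_mat n n"
  shows "dim_gen_eigenspace A e 1 \<le> Polynomial.order e (char_poly A)"
proof -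
  obtain as where "char_poly A = (\<Prod>a\<leftarrow>as. [:- a, 1:])"
    using char_poly_factorized[OF assms] by auto
  then obtain n_as where jnf: "jordan_nf A n_as"
    using jordan_nf_exists[OF assms] by auto
  have "sum_list (map (min 1 \<circ> fst) xs) \<le> sum_list (map fst xs)" for xs :: "(nat \<times> complex) list"
    by (induct xs) auto
  then show ?thesis
    unfolding dim_gen_eigenspace[OF jnf] jordan_nf_order[OF jnf] by (simp add: case_prod_unfold)
qed

lemma char_poly_four_block_diag:
  assumes A: "(A :: 'a :: idom mat) \<in> carrier_mat n n" and D: "D \<in> carrier_mat m m"
  shows "char_poly (four_block_mat A (0\<^sub>m n m) (0\<^sub>m m n) D) = char_poly A * char_poly D"
proof -
  have "char_poly_matrix (four_block_mat A (0\<^sub>m n m) (0\<^sub>m m n) D) =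
      four_block_mat (char_poly_matrix A) (0\<^sub>m n m) (0\<^sub>m m n) (char_poly_matrix D)"
    using A D by (auto simp: char_poly_matrix_def intro!: eq_matI)
  then show ?thesis
    unfolding char_poly_def using A D
    by (simp add: det_four_block_mat_upper_right_zero[of _ n _ m])
qed

lemma dim_gen_eigenspace_four_block_diag:
  assumes B: "(B :: 'a :: field mat) \<in> carrier_mat n n" and C: "C \<in> carrier_mat m m"
  shows "dim_gen_eigenspace (four_block_mat B (0\<^sub>m n m) (0\<^sub>m m n) C) e 1 =
    dim_gen_eigenspace B e 1 + dim_gen_eigenspace C e 1"
proof -
  have "four_block_mat B (0\<^sub>m n m) (0\<^sub>m m n) C - e \<cdot>\<^sub>m 1\<^sub>m (n + m) =
      four_block_mat (B - e \<cdot>\<^sub>m 1\<^sub>m n) (0\<^sub>m n m) (0\<^sub>m m n) (C - e \<cdot>\<^sub>m 1\<^sub>m m)"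
    using B C by (auto intro!: eq_matI)
  then have "kernel.dim (n + m) (four_block_mat B (0\<^sub>m n m) (0\<^sub>m m n) C - e \<cdot>\<^sub>m 1\<^sub>m (n + m)) =
      kernel.dim n (B - e \<cdot>\<^sub>m 1\<^sub>m n) + kernel.dim m (C - e \<cdot>\<^sub>m 1\<^sub>m m)"
    using B C by (intro kernel_four_block_0_mat) auto
  then show ?thesis
    using B C by (simp only: dim_gen_eigenspace_1[OF B] dim_gen_eigenspace_1[OF C]
        dim_gen_eigenspace_1[OF four_block_carrier_mat[OF B C]])
qed

lemma dim_gen_eigenspace_eq_order_four_block_diag:
  assumes B: "(B :: complex mat) \<in> carrier_mat n n" and C: "C \<in> carrier_mat m m"
    and "dim_gen_eigenspace (four_block_mat B (0\<^sub>m n m) (0\<^sub>m m n) C) e 1 =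
      Polynomial.order e (char_poly (four_block_mat B (0\<^sub>m n m) (0\<^sub>m m n) C))"
  shows "dim_gen_eigenspace B e 1 = Polynomial.order e (char_poly B)"
proof -
  have "char_poly B \<noteq> 0" "char_poly C \<noteq> 0"
    using degree_monic_char_poly[OF B] degree_monic_char_poly[OF C] by auto
  then have "Polynomial.order e (char_poly (four_block_mat B (0\<^sub>m n m) (0\<^sub>m m n) C)) =
      Polynomial.order e (char_poly B) + Polynomial.order e (char_poly C)"
    by (simp add: char_poly_four_block_diag[OF B C] order_mult)
  then show ?thesis
    using assms(3) dim_gen_eigenspace_four_block_diag[OF B C, of e]
      dim_gen_eigenspace_le_order[OF B, of e] dim_gen_eigenspace_le_order[OF C, of e]
    by linarith
qed

subsection \<open>Columns of an eigendecomposition\<close>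

definition eig_sel :: "complex mat \<Rightarrow> complex \<Rightarrow> complex mat" where
  "eig_sel S mu = mat (dim_row S) (length (eig_idx S mu))
     (\<lambda>(j, l). if j = eig_idx S mu ! l then 1 else 0)"

lemma eig_sel_carrier:
  "S \<in> carrier_mat N N \<Longrightarrow> eig_sel S mu \<in> carrier_mat N (length (eig_idx S mu))"
  unfolding eig_sel_def by auto

lemma eig_idx_nth:
  assumes "l < length (eig_idx S mu)"
  shows "eig_idx S mu ! l < dim_row S" "S $$ (eig_idx S mu ! l, eig_idx S mu ! l) = mu"
  using nth_mem[OF assms] unfolding eig_idx_def by auto

lemma Zsub_carrier:
  "Z \<in> carrier_mat m N \<Longrightarrow> Zsub Z S mu \<in> carrier_mat m (length (eig_idx S mu))"
  unfolding Zsub_def by auto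

lemma Zsub_eq_mult_eig_sel:
  assumes Z: "Z \<in> carrier_mat m N" and S: "S \<in> carrier_mat N N"
  shows "Zsub Z S mu = Z * eig_sel S mu"
proof (rule eq_matI)
  fix i l
  assume "i < dim_row (Z * eig_sel S mu)" "l < dim_col (Z * eig_sel S mu)"
  then have i: "i < m" and l: "l < length (eig_idx S mu)"
    using Z by (auto simp: eig_sel_def)
  have "(Z * eig_sel S mu) $$ (i, l) =
      (\<Sum>j\<in>{0..<N}. Z $$ (i, j) * (if j = eig_idx S mu ! l then 1 else 0))"
    using Z S i l by (simp add: eig_sel_def scalar_prod_def)
  also have "\<dots> = (\<Sum>j\<in>{0..<N}. if j = eig_idx S mu ! l then Z $$ (i, j) else 0)"
    by (rule sum.cong) auto
  also have "\<dots> = Z $$ (i, eig_idx S mu ! l)"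
    using eig_idx_nth(1)[OF l] S by simp
  finally show "Zsub Z S mu $$ (i, l) = (Z * eig_sel S mu) $$ (i, l)"
    using Z i l by (simp add: Zsub_def)
qed (use Z S in \<open>auto simp: Zsub_def eig_sel_def\<close>)

lemma diagonal_mult_eig_sel_vec:
  assumes S: "diagonal_mat S" "S \<in> carrier_mat N N" and w: "w \<in> carrier_vec (length (eig_idx S mu))"
  shows "S *\<^sub>v (eig_sel S mu *\<^sub>v w) = mu \<cdot>\<^sub>v (eig_sel S mu *\<^sub>v w)"
proof
  let ?u = "eig_sel S mu *\<^sub>v w"
  have u: "?u \<in> carrier_vec N"
    by (rule mult_mat_vec_carrier[OF eig_sel_carrier[OF S(2)] w])
  have u0: "?u $ j = 0" if "j < N" "S $$ (j, j) \<noteq> mu" for j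
  proof -
    have "j \<noteq> eig_idx S mu ! l" if "l < length (eig_idx S mu)" for l
      using eig_idx_nth(2)[OF that] \<open>S $$ (j, j) \<noteq> mu\<close> by auto
    then show ?thesis
      using S w \<open>j < N\<close> by (simp add: eig_sel_def scalar_prod_def)
  qed
  fix j
  assume "j < dim_vec (mu \<cdot>\<^sub>v ?u)"
  then have j: "j < N"
    using eig_sel_carrier[OF S(2), of mu] by simp
  show "(S *\<^sub>v ?u) $ j = (mu \<cdot>\<^sub>v ?u) $ j"
    using diagonal_mat_mult_vec_index[OF S u j] u0[OF j] carrier_vecD[OF u] j
    by (cases "S $$ (j, j) = mu") simp_all
next
  show "dim_vec (S *\<^sub>v (eig_sel S mu *\<^sub>v w)) = dim_vec (mu \<cdot>\<^sub>v (eig_sel S mu *\<^sub>v w))"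
    using S(2) eig_sel_carrier[OF S(2), of mu] by simp
qed

text \<open>An eigenvector of a diagonal matrix is supported on the indices of its eigenvalue, so it is
  recovered from its entries there.\<close>

lemma eig_sel_mult_restriction:
  assumes S: "diagonal_mat S" "S \<in> carrier_mat N N"
    and w: "w \<in> carrier_vec N" "S *\<^sub>v w = mu \<cdot>\<^sub>v w"
  shows "eig_sel S mu *\<^sub>v vec (length (eig_idx S mu)) (\<lambda>l. w $ (eig_idx S mu ! l)) = w"
proof
  let ?idx = "eig_idx S mu"
  fix j
  assume "j < dim_vec w"
  then have j: "j < N"
    using w by simp
  have bij: "bij_betw ((!) ?idx) {..<length ?idx} (set ?idx)"
    by (rule bij_betw_nth) (simp_all add: eig_idx_def)
  have "(eig_sel S mu *\<^sub>v vec (length ?idx) (\<lambda>l. w $ (?idx ! l))) $ j =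
      (\<Sum>l\<in>{0..<length ?idx}. (if j = ?idx ! l then 1 else 0) * w $ (?idx ! l))"
    using S j by (simp add: eig_sel_def scalar_prod_def)
  also have "\<dots> = (\<Sum>l<length ?idx. if j = ?idx ! l then w $ (?idx ! l) else 0)"
    by (rule sum.cong) auto
  also have "\<dots> = (\<Sum>i\<in>set ?idx. if j = i then w $ i else 0)"
    by (rule sum.reindex_bij_betw[OF bij])
  also have "\<dots> = (if j \<in> set ?idx then w $ j else 0)"
    by simp
  also have "\<dots> = w $ j"
  proof -
    have "w $ j = 0" if "S $$ (j, j) \<noteq> mu"
      using diagonal_mat_mult_vec_index[OF S w(1) j] w j that by simp
    then show ?thesis
      using j S(2) by (auto simp: eig_idx_def)
  qed
  finally show "(eig_sel S mu *\<^sub>v vec (length ?idx) (\<lambda>l. w $ (?idx ! l))) $ j = w $ j" .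
next
  show "dim_vec (eig_sel S mu *\<^sub>v vec (length (eig_idx S mu)) (\<lambda>l. w $ (eig_idx S mu ! l))) =
      dim_vec w"
    using S(2) w(1) by (simp add: eig_sel_def)
qed

lemma col_space_eig_sel:
  assumes S: "diagonal_mat S" "S \<in> carrier_mat N N"
  shows "vec_space.col_space N (eig_sel S mu) = mat_kernel (S - mu \<cdot>\<^sub>m 1\<^sub>m N)"
proof
  have P: "eig_sel S mu \<in> carrier_mat N (length (eig_idx S mu))"
    by (rule eig_sel_carrier[OF S(2)])
  show "vec_space.col_space N (eig_sel S mu) \<subseteq> mat_kernel (S - mu \<cdot>\<^sub>m 1\<^sub>m N)"
  proof
    fix x
    assume "x \<in> vec_space.col_space N (eig_sel S mu)"
    then obtain w where w: "w \<in> carrier_vec (length (eig_idx S mu))" and x: "x = eig_sel S mu *\<^sub>v w"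
      unfolding mem_col_space_iff[OF P] by blast
    show "x \<in> mat_kernel (S - mu \<cdot>\<^sub>m 1\<^sub>m N)"
      unfolding mat_kernel_minus_smult_one_iff[OF S(2)] x
      using mult_mat_vec_carrier[OF P w] diagonal_mult_eig_sel_vec[OF S w] ..
  qed
  show "mat_kernel (S - mu \<cdot>\<^sub>m 1\<^sub>m N) \<subseteq> vec_space.col_space N (eig_sel S mu)"
  proof
    fix w
    assume "w \<in> mat_kernel (S - mu \<cdot>\<^sub>m 1\<^sub>m N)"
    then have w: "w \<in> carrier_vec N" "S *\<^sub>v w = mu \<cdot>\<^sub>v w"
      unfolding mat_kernel_minus_smult_one_iff[OF S(2)] by auto
    have "w = eig_sel S mu *\<^sub>v vec (length (eig_idx S mu)) (\<lambda>l. w $ (eig_idx S mu ! l))"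
      by (rule eig_sel_mult_restriction[OF S w, symmetric])
    then show "w \<in> vec_space.col_space N (eig_sel S mu)"
      unfolding mem_col_space_iff[OF P] using vec_carrier by blast
  qed
qed

lemma image_eigenspace_intertwiner:
  assumes A: "(A :: 'a :: field mat) \<in> carrier_mat n n" and B: "B \<in> carrier_mat n n"
    and T: "T \<in> carrier_mat n n" and T': "T' \<in> carrier_mat n n"
    and AT: "A * T = T * B" and inv: "T * T' = 1\<^sub>m n" "T' * T = 1\<^sub>m n"
  shows "(\<lambda>v. T *\<^sub>v v) ` mat_kernel (B - e \<cdot>\<^sub>m 1\<^sub>m n) = mat_kernel (A - e \<cdot>\<^sub>m 1\<^sub>m n)"
proof
  show "(\<lambda>v. T *\<^sub>v v) ` mat_kernel (B - e \<cdot>\<^sub>m 1\<^sub>m n) \<subseteq> mat_kernel (A - e \<cdot>\<^sub>m 1\<^sub>m n)"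
  proof
    fix x
    assume "x \<in> (\<lambda>v. T *\<^sub>v v) ` mat_kernel (B - e \<cdot>\<^sub>m 1\<^sub>m n)"
    then obtain v where "v \<in> mat_kernel (B - e \<cdot>\<^sub>m 1\<^sub>m n)" and x: "x = T *\<^sub>v v"
      by blast
    then have v: "v \<in> carrier_vec n" "B *\<^sub>v v = e \<cdot>\<^sub>v v"
      unfolding mat_kernel_minus_smult_one_iff[OF B] by auto
    show "x \<in> mat_kernel (A - e \<cdot>\<^sub>m 1\<^sub>m n)"
      unfolding mat_kernel_minus_smult_one_iff[OF A] x
      using mult_mat_vec_carrier[OF T v(1)] intertwiner_mult_mat_vec_eigen[OF A B T AT v] ..
  qed
  show "mat_kernel (A - e \<cdot>\<^sub>m 1\<^sub>m n) \<subseteq> (\<lambda>v. T *\<^sub>v v) ` mat_kernel (B - e \<cdot>\<^sub>m 1\<^sub>m n)"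
  proof
    fix x
    assume "x \<in> mat_kernel (A - e \<cdot>\<^sub>m 1\<^sub>m n)"
    then have x: "x \<in> carrier_vec n" "A *\<^sub>v x = e \<cdot>\<^sub>v x"
      unfolding mat_kernel_minus_smult_one_iff[OF A] by auto
    have "T' *\<^sub>v x \<in> mat_kernel (B - e \<cdot>\<^sub>m 1\<^sub>m n)"
      unfolding mat_kernel_minus_smult_one_iff[OF B]
      using mult_mat_vec_carrier[OF T' x(1)]
        intertwiner_mult_mat_vec_eigen[OF B A T' intertwiner_inverse[OF A B T T' AT inv] x] by simp
    moreover have "x = T *\<^sub>v (T' *\<^sub>v x)"
      unfolding assoc_mult_mat_vec[OF T T' x(1), symmetric] inv using x(1) by simp
    ultimately show "x \<in> (\<lambda>v. T *\<^sub>v v) ` mat_kernel (B - e \<cdot>\<^sub>m 1\<^sub>m n)"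
      by blast
  qed
qed

lemma col_space_Zsub_eq_eigenspace:
  assumes Z: "Z \<in> carrier_mat N N" and Zinv: "Zinv \<in> carrier_mat N N"
    and inv: "Z * Zinv = 1\<^sub>m N" "Zinv * Z = 1\<^sub>m N"
    and S: "S \<in> carrier_mat N N" "diagonal_mat S" and A: "A = Z * S * Zinv"
  shows "vec_space.col_space N (Zsub Z S mu) = mat_kernel (A - mu \<cdot>\<^sub>m 1\<^sub>m N)"
proof -
  have AN: "A \<in> carrier_mat N N"
    unfolding A by (intro mult_carrier_mat[OF _ Zinv] mult_carrier_mat[OF Z S(1)])
  have "A * Z = Z * S * (Zinv * Z)"
    unfolding A by (rule assoc_mult_mat[OF mult_carrier_mat[OF Z S(1)] Zinv Z])
  then have AZ: "A * Z = Z * S"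
    by (simp add: inv right_mult_one_mat[OF mult_carrier_mat[OF Z S(1)]])
  show ?thesis
    unfolding Zsub_eq_mult_eig_sel[OF Z S(1)] col_space_mult[OF Z eig_sel_carrier[OF S(1)]]
      col_space_eig_sel[OF S(2,1)]
    by (rule image_eigenspace_intertwiner[OF AN S(1) Z Zinv AZ inv])
qed

subsection \<open>Realification\<close>

definition conj_split_mat :: "nat \<Rightarrow> complex mat" where
  "conj_split_mat n = four_block_mat (1\<^sub>m n) (\<i> \<cdot>\<^sub>m 1\<^sub>m n) (1\<^sub>m n) ((- \<i>) \<cdot>\<^sub>m 1\<^sub>m n)"

definition conj_split_inv_mat :: "nat \<Rightarrow> complex mat" where
  "conj_split_inv_mat n =
     four_block_mat ((1/2) \<cdot>\<^sub>m 1\<^sub>m n) ((1/2) \<cdot>\<^sub>m 1\<^sub>m n) ((- \<i>/2) \<cdot>\<^sub>m 1\<^sub>m n) ((\<i>/2) \<cdot>\<^sub>m 1\<^sub>m n)"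

lemma conj_split_mat_carrier [simp]:
  "conj_split_mat n \<in> carrier_mat (n + n) (n + n)"
  "conj_split_inv_mat n \<in> carrier_mat (n + n) (n + n)"
  by (simp_all add: conj_split_mat_def conj_split_inv_mat_def)

lemma conj_split_mat_inverse:
  "conj_split_mat n * conj_split_inv_mat n = 1\<^sub>m (n + n)"
  "conj_split_inv_mat n * conj_split_mat n = 1\<^sub>m (n + n)"
  unfolding conj_split_mat_def conj_split_inv_mat_def
  by (subst mult_four_block_mat[where ?nr1.0 = n and ?n1.0 = n and ?n2.0 = n and ?nr2.0 = n
        and ?nc1.0 = n and ?nc2.0 = n]; auto intro!: eq_matI)+

lemma smult_one_mult_mat:
  assumes "(X :: 'a :: comm_ring_1 mat) \<in> carrier_mat n m"
  shows "(c \<cdot>\<^sub>m 1\<^sub>m n) * X = c \<cdot>\<^sub>m X"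
  using mult_smult_assoc_mat[OF one_carrier_mat assms, of c] assms by simp

lemma mult_smult_one_mat:
  assumes "(X :: 'a :: comm_ring_1 mat) \<in> carrier_mat m n"
  shows "X * (c \<cdot>\<^sub>m 1\<^sub>m n) = c \<cdot>\<^sub>m X"
  using mult_smult_distrib[OF assms one_carrier_mat, of c] assms by simp

lemma of_real_realify:
  assumes "U \<in> carrier_mat n n"
  shows "map_mat complex_of_real (realify U) =
    four_block_mat (map_mat (\<lambda>z. of_real (Re z)) U) (- map_mat (\<lambda>z. of_real (Im z)) U)
      (map_mat (\<lambda>z. of_real (Im z)) U) (map_mat (\<lambda>z. of_real (Re z)) U)"
  using assms by (auto simp: realify_def Let_def intro!: eq_matI)

lemma of_real_realify_carrier:
  "U \<in> carrier_mat n n \<Longrightarrow> map_mat complex_of_real (realify U) \<in> carrier_mat (n + n) (n + n)"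
  by (simp add: of_real_realify)

lemma conj_split_mult_realify:
  assumes U: "U \<in> carrier_mat n n"
  shows "conj_split_mat n * map_mat complex_of_real (realify U) =
    four_block_mat U (0\<^sub>m n n) (0\<^sub>m n n) (map_mat cnj U) * conj_split_mat n"
proof -
  define A where "A = map_mat (\<lambda>z. complex_of_real (Re z)) U"
  define B where "B = map_mat (\<lambda>z. complex_of_real (Im z)) U"
  have AB: "A \<in> carrier_mat n n" "B \<in> carrier_mat n n" "map_mat cnj U \<in> carrier_mat n n"
    using U by (auto simp: A_def B_def)
  show ?thesis
    unfolding of_real_realify[OF U] conj_split_mat_def A_def[symmetric] B_def[symmetric]
    using U AB
    by (simp add: mult_four_block_mat[where ?nr1.0 = n and ?n1.0 = n and ?n2.0 = n and ?nr2.0 = n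
          and ?nc1.0 = n and ?nc2.0 = n] smult_one_mult_mat mult_smult_one_mat)
      (auto simp: A_def B_def complex_eq_iff intro!: eq_matI)
qed

lemma similar_four_block_conj_realify:
  assumes "U \<in> carrier_mat n n"
  shows "similar_mat (four_block_mat U (0\<^sub>m n n) (0\<^sub>m n n) (map_mat cnj U))
    (map_mat complex_of_real (realify U))"
proof (rule similar_matI[where n = "n + n"])
  let ?D = "four_block_mat U (0\<^sub>m n n) (0\<^sub>m n n) (map_mat cnj U)"
  let ?M = "map_mat complex_of_real (realify U)"
  have D: "?D \<in> carrier_mat (n + n) (n + n)"
    using assms by simp
  have "conj_split_mat n * ?M * conj_split_inv_mat n = ?D * conj_split_mat n * conj_split_inv_mat n"
    using assms by (simp add: conj_split_mult_realify)
  also have "\<dots> = ?D * (conj_split_mat n * conj_split_inv_mat n)"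
    using D conj_split_mat_carrier by (rule assoc_mult_mat)
  also have "\<dots> = ?D"
    by (simp add: conj_split_mat_inverse right_mult_one_mat[OF D])
  finally show "?D = conj_split_mat n * ?M * conj_split_inv_mat n" ..
qed (use assms of_real_realify_carrier[OF assms] in \<open>simp_all add: conj_split_mat_inverse\<close>)

lemma Lmat_carrier: "Lmat n \<in> carrier_mat n (n + n)"
proof -
  have "Lmat n \<in> carrier_mat (n + 0) (n + n)"
    unfolding Lmat_def by (rule four_block_carrier_mat) auto
  then show ?thesis by simp
qed

lemma Lmat_mult_realify:
  assumes U: "U \<in> carrier_mat n n"
  shows "Lmat n * map_mat complex_of_real (realify U) = U * Lmat n"
proof -
  define A where "A = map_mat (\<lambda>z. complex_of_real (Re z)) U"
  define B where "B = map_mat (\<lambda>z. complex_of_real (Im z)) U"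
  have AB: "A \<in> carrier_mat n n" "B \<in> carrier_mat n n"
    using U by (auto simp: A_def B_def)
  have "four_block_mat U (0\<^sub>m n 0) (0\<^sub>m 0 n) (0\<^sub>m 0 0) = U"
    using U by (auto intro!: eq_matI)
  then have "U * Lmat n = four_block_mat U (0\<^sub>m n 0) (0\<^sub>m 0 n) (0\<^sub>m 0 0) * Lmat n"
    by (simp only:)
  also have "\<dots> = four_block_mat U (\<i> \<cdot>\<^sub>m U) (0\<^sub>m 0 n) (0\<^sub>m 0 n)"
    unfolding Lmat_def using U
    by (simp add: mult_four_block_mat[where ?nr1.0 = n and ?n1.0 = n and ?n2.0 = 0 and ?nr2.0 = 0
          and ?nc1.0 = n and ?nc2.0 = n] mult_smult_one_mat)
  finally have UL: "U * Lmat n = four_block_mat U (\<i> \<cdot>\<^sub>m U) (0\<^sub>m 0 n) (0\<^sub>m 0 n)" .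
  show ?thesis
    unfolding UL unfolding of_real_realify[OF U] Lmat_def A_def[symmetric] B_def[symmetric]
    using U AB
    by (simp add: mult_four_block_mat[where ?nr1.0 = n and ?n1.0 = n and ?n2.0 = n and ?nr2.0 = 0
          and ?nc1.0 = n and ?nc2.0 = n] smult_one_mult_mat)
      (auto simp: A_def B_def complex_eq_iff intro!: eq_matI)
qed

lemma Lmat_mult_conj_split_inv:
  "Lmat n * conj_split_inv_mat n = four_block_mat (1\<^sub>m n) (0\<^sub>m n n) (0\<^sub>m 0 n) (0\<^sub>m 0 n)"
  unfolding Lmat_def conj_split_inv_mat_def
  by (subst mult_four_block_mat[where ?nr1.0 = n and ?n1.0 = n and ?n2.0 = n and ?nr2.0 = 0
        and ?nc1.0 = n and ?nc2.0 = n]) (auto intro!: eq_matI)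

lemma Lmat_conj_split_inv_append_zero:
  assumes y: "y \<in> carrier_vec n"
  shows "Lmat n *\<^sub>v (conj_split_inv_mat n *\<^sub>v (y @\<^sub>v 0\<^sub>v n)) = y"
proof -
  have v: "y @\<^sub>v 0\<^sub>v n \<in> carrier_vec (n + n)"
    by (rule append_carrier_vec[OF y zero_carrier_vec])
  have "Lmat n *\<^sub>v (conj_split_inv_mat n *\<^sub>v (y @\<^sub>v 0\<^sub>v n)) = (Lmat n * conj_split_inv_mat n) *\<^sub>v (y @\<^sub>v 0\<^sub>v n)"
    by (rule assoc_mult_mat_vec[OF Lmat_carrier conj_split_mat_carrier(2) v, symmetric])
  also have "\<dots> = (1\<^sub>m n *\<^sub>v y + 0\<^sub>m n n *\<^sub>v 0\<^sub>v n) @\<^sub>v (0\<^sub>m 0 n *\<^sub>v y + 0\<^sub>m 0 n *\<^sub>v 0\<^sub>v n)"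
    unfolding Lmat_mult_conj_split_inv using y by (intro four_block_mat_mult_vec) auto
  also have "\<dots> = y"
    using y by (intro eq_vecI) (auto simp: index_append_vec)
  finally show ?thesis .
qed

lemma four_block_diag_mult_append_zero:
  assumes B: "B \<in> carrier_mat n n" and C: "(C :: 'a :: comm_ring_1 mat) \<in> carrier_mat m m"
    and y: "y \<in> carrier_vec n" "B *\<^sub>v y = e \<cdot>\<^sub>v y"
  shows "four_block_mat B (0\<^sub>m n m) (0\<^sub>m m n) C *\<^sub>v (y @\<^sub>v 0\<^sub>v m) = e \<cdot>\<^sub>v (y @\<^sub>v 0\<^sub>v m)"
proof -
  have "four_block_mat B (0\<^sub>m n m) (0\<^sub>m m n) C *\<^sub>v (y @\<^sub>v 0\<^sub>v m) =
      (B *\<^sub>v y + 0\<^sub>m n m *\<^sub>v 0\<^sub>v m) @\<^sub>v (0\<^sub>m m n *\<^sub>v y + C *\<^sub>v 0\<^sub>v m)"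
    using B C y(1) by (intro four_block_mat_mult_vec) auto
  also have "\<dots> = e \<cdot>\<^sub>v (y @\<^sub>v 0\<^sub>v m)"
    using C y by (intro eq_vecI) (auto simp: index_append_vec scalar_prod_def)
  finally show ?thesis .
qed

lemma Lmat_image_realify_eigenspace:
  assumes U: "U \<in> carrier_mat n n"
  shows "(\<lambda>z. Lmat n *\<^sub>v z) ` mat_kernel (map_mat complex_of_real (realify U) - mu \<cdot>\<^sub>m 1\<^sub>m (n + n))
    = mat_kernel (U - mu \<cdot>\<^sub>m 1\<^sub>m n)"
proof
  let ?M = "map_mat complex_of_real (realify U)"
  let ?D = "four_block_mat U (0\<^sub>m n n) (0\<^sub>m n n) (map_mat cnj U)"
  let ?T' = "conj_split_inv_mat n"
  have M: "?M \<in> carrier_mat (n + n) (n + n)"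
    using U by (rule of_real_realify_carrier)
  have D: "?D \<in> carrier_mat (n + n) (n + n)"
    using U by simp
  show "(\<lambda>z. Lmat n *\<^sub>v z) ` mat_kernel (?M - mu \<cdot>\<^sub>m 1\<^sub>m (n + n)) \<subseteq> mat_kernel (U - mu \<cdot>\<^sub>m 1\<^sub>m n)"
  proof
    fix y
    assume "y \<in> (\<lambda>z. Lmat n *\<^sub>v z) ` mat_kernel (?M - mu \<cdot>\<^sub>m 1\<^sub>m (n + n))"
    then obtain z where "z \<in> mat_kernel (?M - mu \<cdot>\<^sub>m 1\<^sub>m (n + n))" and y: "y = Lmat n *\<^sub>v z"
      by blast
    then have z: "z \<in> carrier_vec (n + n)" "?M *\<^sub>v z = mu \<cdot>\<^sub>v z"
      unfolding mat_kernel_minus_smult_one_iff[OF M] by auto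
    show "y \<in> mat_kernel (U - mu \<cdot>\<^sub>m 1\<^sub>m n)"
      unfolding mat_kernel_minus_smult_one_iff[OF U] y using mult_mat_vec_carrier[OF Lmat_carrier z(1)]
        intertwiner_mult_mat_vec_eigen[OF U M Lmat_carrier Lmat_mult_realify[OF U, symmetric] z] ..
  qed
  show "mat_kernel (U - mu \<cdot>\<^sub>m 1\<^sub>m n) \<subseteq> (\<lambda>z. Lmat n *\<^sub>v z) ` mat_kernel (?M - mu \<cdot>\<^sub>m 1\<^sub>m (n + n))"
  proof
    fix y
    assume "y \<in> mat_kernel (U - mu \<cdot>\<^sub>m 1\<^sub>m n)"
    then have y: "y \<in> carrier_vec n" "U *\<^sub>v y = mu \<cdot>\<^sub>v y"
      unfolding mat_kernel_minus_smult_one_iff[OF U] by auto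
    have v: "y @\<^sub>v 0\<^sub>v n \<in> carrier_vec (n + n)"
      by (rule append_carrier_vec[OF y(1) zero_carrier_vec])
    have "?M * ?T' = ?T' * ?D"
      by (rule intertwiner_inverse[OF D M conj_split_mat_carrier
            conj_split_mult_realify[OF U, symmetric] conj_split_mat_inverse])
    then have "?M *\<^sub>v (?T' *\<^sub>v (y @\<^sub>v 0\<^sub>v n)) = mu \<cdot>\<^sub>v (?T' *\<^sub>v (y @\<^sub>v 0\<^sub>v n))"
      by (rule intertwiner_mult_mat_vec_eigen[OF M D conj_split_mat_carrier(2) _ v
            four_block_diag_mult_append_zero[OF U map_carrier_mat[THEN iffD2, OF U] y]])
    then have "?T' *\<^sub>v (y @\<^sub>v 0\<^sub>v n) \<in> mat_kernel (?M - mu \<cdot>\<^sub>m 1\<^sub>m (n + n))"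
      unfolding mat_kernel_minus_smult_one_iff[OF M]
      using mult_mat_vec_carrier[OF conj_split_mat_carrier(2) v] by simp
    then show "y \<in> (\<lambda>z. Lmat n *\<^sub>v z) ` mat_kernel (?M - mu \<cdot>\<^sub>m 1\<^sub>m (n + n))"
      using Lmat_conj_split_inv_append_zero[OF y(1)] by (metis image_eqI)
  qed
qed

theorem lemma2p2:
  fixes n :: nat and U Z Zinv S :: "complex mat" and mu :: complex
  assumes "n \<ge> 1"
    and "unitary_mat U n"
    and "Z \<in> carrier_mat (2 * n) (2 * n)" and "Zinv \<in> carrier_mat (2 * n) (2 * n)"
    and "Z * Zinv = 1\<^sub>m (2 * n)" and "Zinv * Z = 1\<^sub>m (2 * n)"
    and "S \<in> carrier_mat (2 * n) (2 * n)" and "diagonal_mat S"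
    and "map_mat complex_of_real (realify U) = Z * S * Zinv"
    and "eigenvalue (map_mat complex_of_real (realify U)) mu"
  shows "vec_space.rank n (Lmat n * Zsub Z S mu) = eig_mult U mu
     \<and> (eig_mult U mu > 0 \<longrightarrow>
          vec_space.col_space n (Lmat n * Zsub Z S mu) = mat_kernel (U - mu \<cdot>\<^sub>m 1\<^sub>m n))"
proof -
  have U: "U \<in> carrier_mat n n"
    using assms(2) unfolding unitary_mat_def by simp
  note Z = assms(3)[unfolded mult_2] and Zinv = assms(4)[unfolded mult_2]
    and inv = assms(5,6)[unfolded mult_2] and S = assms(7)[unfolded mult_2] assms(8)
  let ?M = "map_mat complex_of_real (realify U)"
  let ?D = "four_block_mat U (0\<^sub>m n n) (0\<^sub>m n n) (map_mat cnj U)"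
  have eigenspace: "vec_space.col_space n (Lmat n * Zsub Z S mu) = mat_kernel (U - mu \<cdot>\<^sub>m 1\<^sub>m n)"
    unfolding col_space_mult[OF Lmat_carrier Zsub_carrier[OF Z]]
      col_space_Zsub_eq_eigenspace[OF Z Zinv inv S assms(9)]
    by (rule Lmat_image_realify_eigenspace[OF U])
  have "similar_mat ?M S"
    using of_real_realify_carrier[OF U] Z Zinv inv S(1) assms(9)
    by (intro similar_matI[of ?M S Z Zinv "n + n"]) auto
  then have "similar_mat ?D S"
    by (rule similar_mat_trans[OF similar_four_block_conj_realify[OF U]])
  then have "dim_gen_eigenspace ?D mu 1 = Polynomial.order mu (char_poly ?D)"
    by (rule dim_gen_eigenspace_eq_order_if_similar_diagonal[OF _ S(2,1)])
  then have "dim_gen_eigenspace U mu 1 = eig_mult U mu"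
    unfolding eig_mult_def
    by (rule dim_gen_eigenspace_eq_order_four_block_diag[OF U map_carrier_mat[THEN iffD2, OF U]])
  moreover have "U - mu \<cdot>\<^sub>m 1\<^sub>m n \<in> carrier_mat n n"
    by (simp add: minus_carrier_mat)
  then have "vec_space.rank n (Lmat n * Zsub Z S mu) = kernel.dim n (U - mu \<cdot>\<^sub>m 1\<^sub>m n)"
    by (rule rank_eq_kernel_dim_if_col_space_eq[OF eigenspace])
  ultimately show ?thesis
    using eigenspace dim_gen_eigenspace_1[OF U, of mu] by simp
qed

end
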